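(* Let $L$ be an infinite set and consider the edgeless cube $Q_L$. There is a basic sequence $s$ that is convergent over $f_{\mathrm{solved}}$ whose concatenation with itself ($s$ followed by $s$) is not convergent over $f_{\mathrm{solved}}$. In particular, the basic sequences convergent over $f_{\mathrm{solved}}$ are not closed under concatenation.
   Context: Let $L$ be an infinite set, $-L=\{-r:r\in L\}$ a disjoint copy of $L$, and $0$ a new element; $L^\dagger=-L\cup\{0\}\cup L$ with $-(-r)=r$, $-0=0$. Adjoin $\pm\infty$ with $-(+\infty)=-\infty$ and set $\bar L^\dagger=L^\dagger\cup\{\pm\infty\}$. Points of $U=(\bar L^\dagger)^3$ have coordinates $x,y,z$. The edgeless cube $Q_L$ is the set of cells: points of $U$ with exactly one coordinate in $\{\pm\infty\}$. For $i\in\{x,y,z\}$, $\alpha\in\bar L^\dagger$, the quarter-turn twist $T_{i,\alpha}$ is the permutation of cells fixing every cell $p$ with $p_i\ne\alpha$ and acting on the others by $T_{x,\alpha}(\alpha,y,z)=(\alpha,-z,y)$, $T_{y,\alpha}(x,\alpha,z)=(z,\alpha,-x)$, $T_{z,\alpha}(x,y,\alpha)=(-y,x,\alpha)$. Basic twists are $T,T^2,T^3$ for quarter-turn twists $T$. A basic sequence is a sequence $\langle\sigma_\eta:\eta<\theta\rangle$ of basic twists of ordinal length $\theta$. A configuration is a map $f$ from cells to the six colors red, white, green, orange, yellow, blue together with a special value NaC; it is legal if it never takes value NaC. The solved configuration $f_{\mathrm{solved}}$ colors a cell red, blue, white, orange, green, yellow according as $x=+\infty$, $y=+\infty$, $z=+\infty$,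 $x=-\infty$, $y=-\infty$, $z=-\infty$. A twist $\sigma$ acts by $(\sigma f)(c)=f(\sigma^{-1}c)$. Applying $\langle\sigma_\eta:\eta<\theta\rangle$ to $f_0$ produces $f_{\eta+1}=\sigma_\eta f_\eta$, and for limit $\lambda\le\theta$, $f_\lambda(c)$ is the eventually constant value of $f_\eta(c)$ ($\eta<\lambda$) if it exists and NaC otherwise; $f_\theta$ is the terminal configuration. The sequence is convergent over $f_0$ if $f_\theta$ is legal. *)

theory Defs
  imports Main
begin

text \<open>Coordinates: elements of the extended set L-bar-dagger, built over an
  element type 'a; only Pos r / Neg r with r in L are valid.\<close>
datatype 'a coord = Pos 'a | Neg 'a | Zero | PInf | NInf

fun cneg :: "'a coord \<Rightarrow> 'a coord" where
  "cneg (Pos r) = Neg r" | "cneg (Neg r) = Pos r" | "cneg Zero = Zero"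
| "cneg PInf = NInf" | "cneg NInf = PInf"

fun valid :: "'a set \<Rightarrow> 'a coord \<Rightarrow> bool" where
  "valid L (Pos r) = (r \<in> L)" | "valid L (Neg r) = (r \<in> L)" | "valid L _ = True"

definition is_inf :: "'a coord \<Rightarrow> bool" where
  "is_inf c \<longleftrightarrow> c = PInf \<or> c = NInf"

type_synonym 'a point = "'a coord \<times> 'a coord \<times> 'a coord"

text \<open>The edgeless cube Q_L: points of U with exactly one infinite coordinate.\<close>
definition cells :: "'a set \<Rightarrow> 'a point set" where
  "cells L = {(x, y, z). valid L x \<and> valid L y \<and> valid L z \<and>
      ((is_inf x \<and> \<not> is_inf y \<and> \<not> is_inf z) \<or>
       (\<not> is_inf x \<and> is_inf y \<and> \<not> is_inf z) \<or>
       (\<not> is_inf x \<and> \<not> is_inf y \<and> is_inf z))}"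

datatype axis = AX | AY | AZ

text \<open>Quarter-turn twist T_{i,alpha}, given on all of U (it preserves the cells).\<close>
fun qturn :: "axis \<Rightarrow> 'a coord \<Rightarrow> 'a point \<Rightarrow> 'a point" where
  "qturn AX \<alpha> (x, y, z) = (if x = \<alpha> then (x, cneg z, y) else (x, y, z))"
| "qturn AY \<alpha> (x, y, z) = (if y = \<alpha> then (z, y, cneg x) else (x, y, z))"
| "qturn AZ \<alpha> (x, y, z) = (if z = \<alpha> then (cneg y, x, z) else (x, y, z))"

text \<open>A basic twist T^k (k = 1,2,3) of a quarter-turn twist T_{i,alpha}.\<close>
type_synonym 'a btwist = "axis \<times> 'a coord \<times> nat"

definition is_basic :: "'a set \<Rightarrow> 'a btwist \<Rightarrow> bool" where
  "is_basic L t \<longleftrightarrow> (case t of (i, \<alpha>, k) \<Rightarrow> valid L \<alpha> \<and> k \<in> {1, 2, 3})"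

definition bt_fun :: "'a btwist \<Rightarrow> 'a point \<Rightarrow> 'a point" where
  "bt_fun t = (case t of (i, \<alpha>, k) \<Rightarrow> qturn i \<alpha> ^^ k)"

datatype color = Red | White | Green | Orange | Yellow | Blue | NaC

type_synonym 'a config = "'a point \<Rightarrow> color"

definition legal :: "'a set \<Rightarrow> 'a config \<Rightarrow> bool" where
  "legal L f \<longleftrightarrow> (\<forall>c \<in> cells L. f c \<noteq> NaC)"

definition f_solved :: "'a config" where
  "f_solved = (\<lambda>(x, y, z).
     if x = PInf then Red else if y = PInf then Blue else if z = PInf then White
     else if x = NInf then Orange else if y = NInf then Green else if z = NInf then Yellow
     else NaC)"

definition act :: "'a btwist \<Rightarrow> 'a config \<Rightarrow> 'a config" where
  "act t f = f \<circ> inv (bt_fun t)"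

text \<open>A basic sequence of ordinal length: a well-order r (its order type is theta)
  with a basic twist at each position.\<close>
definition basic_seq :: "'a set \<Rightarrow> 'i rel \<Rightarrow> ('i \<Rightarrow> 'a btwist) \<Rightarrow> bool" where
  "basic_seq L r \<sigma> \<longleftrightarrow> Well_order r \<and> (\<forall>i \<in> Field r. is_basic L (\<sigma> i))"

text \<open>Stages: Some i (i in Field r) is the stage just before twist sigma_i is applied;
  None is the terminal stage theta. preds r eta = positions strictly before eta.\<close>
definition preds :: "'i rel \<Rightarrow> 'i option \<Rightarrow> 'i set" where
  "preds r \<eta> = (case \<eta> of None \<Rightarrow> Field r
                  | Some j \<Rightarrow> {i \<in> Field r. (i, j) \<in> r \<and> i \<noteq> j})"

definition run :: "'i rel \<Rightarrow> ('i \<Rightarrow> 'a btwist) \<Rightarrow> 'a config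
                    \<Rightarrow> ('i option \<Rightarrow> 'a config) \<Rightarrow> bool" where
  "run r \<sigma> f0 F \<longleftrightarrow>
    (\<forall>\<eta> \<in> {None} \<union> Some ` Field r.
      (preds r \<eta> = {} \<longrightarrow> F \<eta> = f0) \<and>
      (\<forall>i \<in> preds r \<eta>. (\<forall>k \<in> preds r \<eta>. (k, i) \<in> r) \<longrightarrow> F \<eta> = act (\<sigma> i) (F (Some i))) \<and>
      (preds r \<eta> \<noteq> {} \<and> \<not> (\<exists>i \<in> preds r \<eta>. \<forall>k \<in> preds r \<eta>. (k, i) \<in> r) \<longrightarrow>
        (\<forall>c. F \<eta> c =
          (if \<exists>v. \<exists>i \<in> preds r \<eta>. \<forall>k \<in> preds r \<eta>. (i, k) \<in> r \<longrightarrow> F (Some k) c = v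
           then (THE v. \<exists>i \<in> preds r \<eta>. \<forall>k \<in> preds r \<eta>. (i, k) \<in> r \<longrightarrow> F (Some k) c = v)
           else NaC))))"

definition terminal :: "'i rel \<Rightarrow> ('i \<Rightarrow> 'a btwist) \<Rightarrow> 'a config \<Rightarrow> 'a config" where
  "terminal r \<sigma> f0 = (THE g. \<exists>F. run r \<sigma> f0 F \<and> F None = g)"

definition convergent :: "'a set \<Rightarrow> 'i rel \<Rightarrow> ('i \<Rightarrow> 'a btwist) \<Rightarrow> 'a config \<Rightarrow> bool" where
  "convergent L r \<sigma> f0 \<longleftrightarrow> legal L (terminal r \<sigma> f0)"

definition concat_rel :: "'i rel \<Rightarrow> 'j rel \<Rightarrow> ('i + 'j) rel" where
  "concat_rel r s = {(Inl a, Inl b) | a b. (a, b) \<in> r} \<union> {(Inr a, Inr b) | a b. (a, b) \<in> s}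
                    \<union> {(Inl a, Inr b) | a b. a \<in> Field r \<and> b \<in> Field s}"

end

(*
  Fix a \<in> L, let A be the half turn of the red face x = +\<infinity> and B the half turn of the
  slice y = a.  The sequence s of length \<omega> + 1 performs A \<omega> times and then B.  Runs along
  a well-order are unique, so running s twice is the same as running s once more from the
  terminal configuration of the first pass.  Started from g, the \<omega> half turns A make every
  cell c with g (A c) \<noteq> g c oscillate, so at the limit stage g is replaced by NaC at exactly
  those cells.  From the solved cube A changes nothing, and s ends in the legal configuration
  f_solved \<circ> B.  But B has moved an orange sticker onto the red face at (+\<infinity>, a, 0), so on
  the second pass A swaps it forever with the red sticker at (+\<infinity>, -a, 0); that cell is NaC
  at the limit, and the final B does not move it.
*)
theory Submission imports Defs begin

section \<open>Runs along a well-order are unique\<close>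

definition is_last :: "'i rel \<Rightarrow> 'i set \<Rightarrow> 'i \<Rightarrow> bool" where
  "is_last r P i \<longleftrightarrow> i \<in> P \<and> (\<forall>k\<in>P. (k, i) \<in> r)"

definition eventually_value :: "'i rel \<Rightarrow> 'i set \<Rightarrow> ('i \<Rightarrow> 'a config) \<Rightarrow> 'a point \<Rightarrow> color \<Rightarrow> bool" where
  "eventually_value r P G c v \<longleftrightarrow> (\<exists>i\<in>P. \<forall>k\<in>P. (i, k) \<in> r \<longrightarrow> G k c = v)"

definition limit_config :: "'i rel \<Rightarrow> 'i set \<Rightarrow> ('i \<Rightarrow> 'a config) \<Rightarrow> 'a config" where
  "limit_config r P G c =
     (if \<exists>v. eventually_value r P G c v then THE v. eventually_value r P G c v else NaC)"

definition run_step :: "'i rel \<Rightarrow> ('i \<Rightarrow> 'a btwist) \<Rightarrow> 'a config \<Rightarrow> ('i option \<Rightarrow> 'a config)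
                        \<Rightarrow> 'i option \<Rightarrow> bool" where
  "run_step r \<sigma> f0 F \<eta> \<longleftrightarrow>
     (preds r \<eta> = {} \<longrightarrow> F \<eta> = f0) \<and>
     (\<forall>i. is_last r (preds r \<eta>) i \<longrightarrow> F \<eta> = act (\<sigma> i) (F (Some i))) \<and>
     (preds r \<eta> \<noteq> {} \<and> (\<nexists>i. is_last r (preds r \<eta>) i) \<longrightarrow>
        F \<eta> = limit_config r (preds r \<eta>) (\<lambda>k. F (Some k)))"

lemma run_iff_run_step:
  "run r \<sigma> f0 F \<longleftrightarrow> (\<forall>\<eta> \<in> insert None (Some ` Field r). run_step r \<sigma> f0 F \<eta>)"
proof -
  have limit: "(F \<eta> = limit_config r P (\<lambda>k. F (Some k))) \<longleftrightarrow>
    (\<forall>c. F \<eta> c =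
       (if \<exists>v. \<exists>i \<in> P. \<forall>k \<in> P. (i, k) \<in> r \<longrightarrow> F (Some k) c = v
        then (THE v. \<exists>i \<in> P. \<forall>k \<in> P. (i, k) \<in> r \<longrightarrow> F (Some k) c = v) else NaC))"
    for \<eta> P
    unfolding limit_config_def eventually_value_def fun_eq_iff by (rule refl)
  show ?thesis
    unfolding run_def run_step_def limit is_last_def
    by (simp only: Ball_def Bex_def imp_conjL Un_insert_left Un_empty_left)
qed

lemma limit_config_eqI:
  assumes "eventually_value r P G = eventually_value r' P' G'"
  shows "limit_config r P G = limit_config r' P' G'"
  unfolding limit_config_def assms by (rule refl)

lemma limit_config_cong:
  "(\<And>k. k \<in> P \<Longrightarrow> G k = G' k) \<Longrightarrow> limit_config r P G = limit_config r P G'"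
proof -
  assume agree: "\<And>k. k \<in> P \<Longrightarrow> G k = G' k"
  have "eventually_value r P G = eventually_value r P G'"
    unfolding eventually_value_def using agree by (intro ext) simp
  then show ?thesis by (rule limit_config_eqI)
qed

lemma run_step_determined:
  assumes F: "run_step r \<sigma> f0 F \<eta>" and G: "run_step r \<sigma> f0 G \<eta>"
    and agree: "\<And>k. k \<in> preds r \<eta> \<Longrightarrow> F (Some k) = G (Some k)"
  shows "F \<eta> = G \<eta>"
proof -
  consider "preds r \<eta> = {}" | i where "is_last r (preds r \<eta>) i"
    | "preds r \<eta> \<noteq> {}" "\<nexists>i. is_last r (preds r \<eta>) i"
    by blast
  then show ?thesis
  proof cases
    case 1
    with F G show ?thesis by (simp add: run_step_def)
  next
    case (2 i)
    then have "i \<in> preds r \<eta>" by (simp add: is_last_def)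
    with 2 F G agree show ?thesis by (simp add: run_step_def)
  next
    case 3
    have "limit_config r (preds r \<eta>) (\<lambda>k. F (Some k)) = limit_config r (preds r \<eta>) (\<lambda>k. G (Some k))"
      using agree by (rule limit_config_cong)
    with 3 F G show ?thesis by (simp add: run_step_def)
  qed
qed

lemma run_stepD: "run r \<sigma> f0 F \<Longrightarrow> \<eta> \<in> insert None (Some ` Field r) \<Longrightarrow> run_step r \<sigma> f0 F \<eta>"
  unfolding run_iff_run_step by blast

lemma run_unique:
  assumes wf: "wf (r - Id)" and F: "run r \<sigma> f0 F" and G: "run r \<sigma> f0 G"
  shows "F None = G None"
proof -
  have agree: "F (Some i) = G (Some i)" if "i \<in> Field r" for i
    using wf that
  proof (induction i rule: wf_induct_rule)
    case (less i)
    have "F (Some k) = G (Some k)" if "k \<in> preds r (Some i)" for k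
      using that less.IH by (simp add: preds_def)
    moreover have "Some i \<in> insert None (Some ` Field r)" using less.prems by simp
    ultimately show ?case
      using run_step_determined run_stepD[OF F] run_stepD[OF G] by metis
  qed
  have "F (Some k) = G (Some k)" if "k \<in> preds r None" for k
    using that agree by (simp add: preds_def)
  then show ?thesis
    using run_step_determined run_stepD[OF F] run_stepD[OF G] by blast
qed

lemma terminal_eqI:
  assumes wf: "wf (r - Id)" and F: "run r \<sigma> f0 F"
  shows "terminal r \<sigma> f0 = F None"
  unfolding terminal_def
proof (rule the_equality)
  show "\<exists>G. run r \<sigma> f0 G \<and> G None = F None" using F by blast
next
  fix g assume "\<exists>G. run r \<sigma> f0 G \<and> G None = g"
  then show "g = F None" using run_unique[OF wf _ F] by blast
qed

section \<open>Concatenation\<close>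

lemma preds_subset_Field: "preds r \<eta> \<subseteq> Field r"
  by (auto simp: preds_def split: option.split)

lemma concat_rel_iff [simp]:
  "(Inl i, Inl j) \<in> concat_rel r s \<longleftrightarrow> (i, j) \<in> r"
  "(Inr i', Inr j') \<in> concat_rel r s \<longleftrightarrow> (i', j') \<in> s"
  "(Inl i, Inr j') \<in> concat_rel r s \<longleftrightarrow> i \<in> Field r \<and> j' \<in> Field s"
  "(Inr i', Inl j) \<notin> concat_rel r s"
  unfolding concat_rel_def by auto

lemma Field_concat_rel: "Field (concat_rel r s) = Inl ` Field r \<union> Inr ` Field s"
proof -
  have Inl: "Inl i \<in> Field (concat_rel r s) \<longleftrightarrow> i \<in> Field r" for i
  proof
    assume "Inl i \<in> Field (concat_rel r s)"
    then obtain y where "(Inl i, y) \<in> concat_rel r s \<or> (y, Inl i) \<in> concat_rel r s"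
      unfolding Field_iff by blast
    then show "i \<in> Field r" by (cases y) (auto intro: FieldI1 FieldI2)
  next
    assume "i \<in> Field r"
    then obtain j where "(i, j) \<in> r \<or> (j, i) \<in> r" unfolding Field_iff by blast
    then show "Inl i \<in> Field (concat_rel r s)"
      by (auto intro: FieldI1[of "Inl i" "Inl j"] FieldI2[of "Inl j" "Inl i"])
  qed
  have Inr: "Inr j \<in> Field (concat_rel r s) \<longleftrightarrow> j \<in> Field s" for j
  proof
    assume "Inr j \<in> Field (concat_rel r s)"
    then obtain y where "(Inr j, y) \<in> concat_rel r s \<or> (y, Inr j) \<in> concat_rel r s"
      unfolding Field_iff by blast
    then show "j \<in> Field s" by (cases y) (auto intro: FieldI1 FieldI2)
  next
    assume "j \<in> Field s"
    then obtain k where "(j, k) \<in> s \<or> (k, j) \<in> s" unfolding Field_iff by blast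
    then show "Inr j \<in> Field (concat_rel r s)"
      by (auto intro: FieldI1[of "Inr j" "Inr k"] FieldI2[of "Inr k" "Inr j"])
  qed
  show ?thesis
  proof (intro set_eqI)
    show "x \<in> Field (concat_rel r s) \<longleftrightarrow> x \<in> Inl ` Field r \<union> Inr ` Field s" for x
      by (cases x) (auto simp: Inl Inr)
  qed
qed

lemma preds_concat_rel_Inl: "preds (concat_rel r s) (Some (Inl i)) = Inl ` preds r (Some i)"
  unfolding preds_def Field_concat_rel by auto

lemma preds_concat_rel_Inr:
  assumes "\<eta> \<in> insert None (Some ` Field s)"
  shows "preds (concat_rel r s) (map_option Inr \<eta>) = Inl ` Field r \<union> Inr ` preds s \<eta>"
  using assms unfolding preds_def Field_concat_rel by (cases \<eta>) force+

lemma wf_concat_rel: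
  fixes r :: "'i rel" and s :: "'j rel"
  assumes "wf (r - Id)" "wf (s - Id)"
  shows "wf (concat_rel r s - Id)"
proof -
  let ?left = "map_prod Inl Inl ` (r - Id) :: ('i + 'j) rel"
  let ?right = "map_prod Inr Inr ` (s - Id) :: ('i + 'j) rel"
  let ?cross = "{(Inl i, Inr j) | i j. True} :: ('i + 'j) rel"
  have "wf ?left" using assms(1) by (rule wf_map_prod_image) (simp add: inj_def)
  moreover have "wf ?right" using assms(2) by (rule wf_map_prod_image) (simp add: inj_def)
  moreover have "wf ?cross"
    by (rule wf_subset[OF wf_measure[of "case_sum (\<lambda>_. 0) (\<lambda>_. 1)"]]) auto
  ultimately have "wf ((?left \<union> ?cross) \<union> ?right)"
    by (intro wf_Un) auto
  then show ?thesis
    by (rule wf_subset) (auto simp: concat_rel_def)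
qed

lemma is_last_concat_rel_Inl:
  "is_last (concat_rel r s) (Inl ` P) k \<longleftrightarrow> (\<exists>i. k = Inl i \<and> is_last r P i)"
  unfolding is_last_def by auto

lemma is_last_concat_rel_Inr:
  assumes "P \<noteq> {}" "P \<subseteq> Field s"
  shows "is_last (concat_rel r s) (Inl ` Field r \<union> Inr ` P) k \<longleftrightarrow> (\<exists>j. k = Inr j \<and> is_last s P j)"
proof
  assume last: "is_last (concat_rel r s) (Inl ` Field r \<union> Inr ` P) k"
  then have above: "(Inr j, k) \<in> concat_rel r s" if "j \<in> P" for j
    using that by (simp add: is_last_def)
  obtain j where "j \<in> P" using assms(1) by blast
  then obtain j' where "k = Inr j'" using above by (cases k) auto
  with last above show "\<exists>j. k = Inr j \<and> is_last s P j" by (auto simp: is_last_def)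
next
  assume "\<exists>j. k = Inr j \<and> is_last s P j"
  with assms(2) show "is_last (concat_rel r s) (Inl ` Field r \<union> Inr ` P) k"
    by (auto simp: is_last_def)
qed

lemma limit_config_concat_rel_Inl:
  "limit_config (concat_rel r s) (Inl ` P) H = limit_config r P (H \<circ> Inl)"
  by (intro limit_config_eqI ext) (auto simp: eventually_value_def)

lemma limit_config_concat_rel_Inr:
  assumes "P \<noteq> {}" "P \<subseteq> Field s"
  shows "limit_config (concat_rel r s) (Inl ` Field r \<union> Inr ` P) H = limit_config s P (H \<circ> Inr)"
proof (intro limit_config_eqI ext iffI)
  fix c v
  assume "eventually_value (concat_rel r s) (Inl ` Field r \<union> Inr ` P) H c v"
  then obtain i where i: "i \<in> Inl ` Field r \<union> Inr ` P"
    and after_i: "\<And>k. k \<in> Inl ` Field r \<union> Inr ` P \<Longrightarrow> (i, k) \<in> concat_rel r s \<Longrightarrow> H k c = v"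
    unfolding eventually_value_def by blast
  show "eventually_value s P (H \<circ> Inr) c v"
  proof (cases i)
    case (Inl a)
    \<comment> \<open>every stage of \<open>s\<close> comes after \<open>i\<close>\<close>
    obtain j where "j \<in> P" using assms(1) by blast
    moreover have "H (Inr k) c = v" if "k \<in> P" for k
      using that i Inl assms(2) by (intro after_i) auto
    ultimately show ?thesis unfolding eventually_value_def by auto
  next
    case (Inr j)
    have "H (Inr k) c = v" if "k \<in> P" "(j, k) \<in> s" for k
      using that Inr by (intro after_i) auto
    with i Inr show ?thesis unfolding eventually_value_def by auto
  qed
next
  fix c v
  assume "eventually_value s P (H \<circ> Inr) c v"
  then obtain j where "j \<in> P" and after_j: "\<forall>k\<in>P. (j, k) \<in> s \<longrightarrow> H (Inr k) c = v"
    unfolding eventually_value_def by auto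
  have "H k c = v" if "(Inr j, k) \<in> concat_rel r s" "k \<in> Inl ` Field r \<union> Inr ` P" for k
    using that after_j by (cases k) auto
  with \<open>j \<in> P\<close> show "eventually_value (concat_rel r s) (Inl ` Field r \<union> Inr ` P) H c v"
    unfolding eventually_value_def by blast
qed

lemma run_step_concat_rel_Inl:
  assumes step: "run_step r \<sigma> f0 F \<eta>"
    and preds: "preds (concat_rel r s) \<eta>' = Inl ` preds r \<eta>"
    and H: "H \<eta>' = F \<eta>" "\<And>i. H (Some (Inl i)) = F (Some i)"
  shows "run_step (concat_rel r s) (case_sum \<sigma> \<tau>) f0 H \<eta>'"
  using step unfolding run_step_def preds H(1) is_last_concat_rel_Inl limit_config_concat_rel_Inl
  by (auto simp: H(2) comp_def)

lemma run_step_concat_rel_Inr: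
  assumes step: "run_step s \<tau> g G \<eta>" and \<eta>: "\<eta> \<in> insert None (Some ` Field s)"
    and nonempty: "preds s \<eta> \<noteq> {}"
    and H: "H (map_option Inr \<eta>) = G \<eta>" "\<And>j. H (Some (Inr j)) = G (Some j)"
  shows "run_step (concat_rel r s) (case_sum \<sigma> \<tau>) f0 H (map_option Inr \<eta>)"
  using step nonempty preds_subset_Field[of s \<eta>]
  unfolding run_step_def preds_concat_rel_Inr[OF \<eta>] H(1)
  by (auto simp: is_last_concat_rel_Inr limit_config_concat_rel_Inr H(2) comp_def)

definition concat_run :: "('i option \<Rightarrow> 'a config) \<Rightarrow> ('j option \<Rightarrow> 'a config) \<Rightarrow> ('i + 'j) option \<Rightarrow> 'a config"
  where "concat_run F G \<eta> = (case \<eta> of None \<Rightarrow> G None | Some k \<Rightarrow> case_sum (F \<circ> Some) (G \<circ> Some) k)"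

lemma concat_run_simps [simp]:
  "concat_run F G (Some (Inl i)) = F (Some i)"
  "concat_run F G (Some (Inr j)) = G (Some j)"
  "concat_run F G None = G None"
  by (simp_all add: concat_run_def)

lemma run_concat_rel:
  assumes F: "run r \<sigma> f0 F" and G: "run s \<tau> (F None) G"
  shows "run (concat_rel r s) (case_sum \<sigma> \<tau>) f0 (concat_run F G)"
proof -
  have left: "run_step (concat_rel r s) (case_sum \<sigma> \<tau>) f0 (concat_run F G) (Some (Inl i))"
    if "i \<in> Field r" for i
    using that by (intro run_step_concat_rel_Inl[OF run_stepD[OF F]]) (simp_all add: preds_concat_rel_Inl)
  have right: "run_step (concat_rel r s) (case_sum \<sigma> \<tau>) f0 (concat_run F G) (map_option Inr \<eta>)"
    if \<eta>: "\<eta> \<in> insert None (Some ` Field s)" for \<eta>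
  proof -
    have H: "concat_run F G (map_option Inr \<eta>) = G \<eta>" by (cases \<eta>) simp_all
    show ?thesis
    proof (cases "preds s \<eta> = {}")
      case True
      \<comment> \<open>the first stage of \<open>s\<close> is the end of \<open>r\<close> in the concatenation\<close>
      with run_stepD[OF G \<eta>] have "G \<eta> = F None" by (simp add: run_step_def)
      moreover have "preds (concat_rel r s) (map_option Inr \<eta>) = Inl ` preds r None"
        using preds_concat_rel_Inr[OF \<eta>] True by (simp add: preds_def)
      ultimately show ?thesis
        using H by (intro run_step_concat_rel_Inl[OF run_stepD[OF F]]) simp_all
    next
      case False
      with H show ?thesis by (intro run_step_concat_rel_Inr[OF run_stepD[OF G \<eta>] \<eta>]) simp_all
    qed
  qed
  show ?thesis unfolding run_iff_run_step
  proof
    fix \<eta>' assume "\<eta>' \<in> insert None (Some ` Field (concat_rel r s))"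
    then show "run_step (concat_rel r s) (case_sum \<sigma> \<tau>) f0 (concat_run F G) \<eta>'"
      unfolding Field_concat_rel using left right[of None] right[of "Some j" for j] by auto
  qed
qed

lemma terminal_concat_rel:
  assumes wf: "wf (r - Id)" "wf (s - Id)"
    and F: "run r \<sigma> f0 F" and G: "run s \<tau> (terminal r \<sigma> f0) G"
  shows "terminal (concat_rel r s) (case_sum \<sigma> \<tau>) f0 = terminal s \<tau> (terminal r \<sigma> f0)"
proof -
  have "run (concat_rel r s) (case_sum \<sigma> \<tau>) f0 (concat_run F G)"
    using run_concat_rel[OF F] G terminal_eqI[OF wf(1) F] by simp
  then have "terminal (concat_rel r s) (case_sum \<sigma> \<tau>) f0 = concat_run F G None"
    by (rule terminal_eqI[OF wf_concat_rel[OF wf]])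
  also have "\<dots> = G None" by simp
  also have "\<dots> = terminal s \<tau> (terminal r \<sigma> f0)"
    using terminal_eqI[OF wf(2) G] by simp
  finally show ?thesis .
qed

section \<open>The counterexample\<close>

lemma cneg_cneg [simp]: "cneg (cneg c) = c"
  by (cases c) simp_all

lemma qturn_funpow_4: "qturn i \<alpha> ^^ 4 = id"
  by (cases i) (auto simp: fun_eq_iff numeral_eq_Suc)

lemma act_half_turn: "act (i, \<alpha>, 2) f = f \<circ> bt_fun (i, \<alpha>, 2)"
proof -
  have "bt_fun (i, \<alpha>, 2) \<circ> bt_fun (i, \<alpha>, 2) = qturn i \<alpha> ^^ (2 + 2)"
    unfolding funpow_add by (simp add: bt_fun_def)
  also have "\<dots> = id" using qturn_funpow_4 by simp
  finally have involution: "bt_fun (i, \<alpha>, 2) \<circ> bt_fun (i, \<alpha>, 2) = id" .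
  have "inv (bt_fun (i, \<alpha>, 2)) = bt_fun (i, \<alpha>, 2)"
    by (rule inv_unique_comp[OF involution involution])
  then show ?thesis by (simp add: act_def)
qed

definition half_turn_red :: "'a point \<Rightarrow> 'a point" where
  "half_turn_red = (\<lambda>(x, y, z). if x = PInf then (x, cneg y, cneg z) else (x, y, z))"

definition half_turn_slice :: "'a \<Rightarrow> 'a point \<Rightarrow> 'a point" where
  "half_turn_slice a = (\<lambda>(x, y, z). if y = Pos a then (cneg x, y, cneg z) else (x, y, z))"

lemma bt_fun_half_turn_red: "bt_fun (AX, PInf, 2) = half_turn_red"
  unfolding bt_fun_def half_turn_red_def by (auto simp: numeral_2_eq_2 fun_eq_iff)

lemma bt_fun_half_turn_slice: "bt_fun (AY, Pos a, 2) = half_turn_slice a"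
  unfolding bt_fun_def half_turn_slice_def by (auto simp: numeral_2_eq_2 fun_eq_iff)

lemma half_turn_red_half_turn_red [simp]: "half_turn_red (half_turn_red p) = p"
  unfolding half_turn_red_def by (auto split: prod.splits)

lemma f_solved_half_turn_red: "f_solved \<circ> half_turn_red = f_solved"
  unfolding f_solved_def half_turn_red_def by (auto simp: fun_eq_iff)

lemma legal_f_solved_half_turn_slice: "legal L (f_solved \<circ> half_turn_slice a)"
  unfolding legal_def cells_def f_solved_def half_turn_slice_def is_inf_def by auto

text \<open>The ordinal \<open>\<omega> + 1\<close> on \<open>nat\<close>: the positions \<open>1 < 2 < 3 < \<dots>\<close> are followed by \<open>0\<close>.\<close>
definition omega_succ :: "nat rel" where
  "omega_succ = {(i, j). j = 0 \<or> (0 < i \<and> i \<le> j)}"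

lemma omega_succ_iff [simp]: "(i, j) \<in> omega_succ \<longleftrightarrow> j = 0 \<or> (0 < i \<and> i \<le> j)"
  by (simp add: omega_succ_def)

lemma Field_omega_succ [simp]: "Field omega_succ = UNIV"
proof -
  have "(i, 0) \<in> omega_succ" for i by simp
  then show ?thesis by (auto intro: FieldI1)
qed

lemma wf_omega_succ: "wf (omega_succ - Id)"
proof (rule wf_subset)
  show "omega_succ - Id \<subseteq> inv_image (less_than <*lex*> less_than) (\<lambda>i. (if i = 0 then 1 else 0 :: nat, i))"
    by (auto split: if_splits)
qed (intro wf_inv_image wf_lex_prod wf_less_than)

lemma Well_order_omega_succ: "Well_order omega_succ"
  unfolding well_order_on_def
proof
  show "linear_order_on (Field omega_succ) omega_succ"
    unfolding linear_order_on_def partial_order_on_def preorder_on_def refl_on_def trans_def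
      antisym_def total_on_def
    by auto
qed (rule wf_omega_succ)

lemma preds_omega_succ:
  "preds omega_succ None = UNIV"
  "preds omega_succ (Some 0) = {0<..}"
  "preds omega_succ (Some (Suc n)) = {0<..n}"
  unfolding preds_def by auto

definition flip_seq :: "'a \<Rightarrow> nat \<Rightarrow> 'a btwist" where
  "flip_seq a i = (if i = 0 then (AY, Pos a, 2) else (AX, PInf, 2))"

definition red_flip_limit :: "'a config \<Rightarrow> 'a config" where
  "red_flip_limit g c = (if g (half_turn_red c) = g c then g c else NaC)"

definition flip_run :: "'a \<Rightarrow> 'a config \<Rightarrow> nat option \<Rightarrow> 'a config" where
  "flip_run a g \<eta> = (case \<eta> of
       None \<Rightarrow> red_flip_limit g \<circ> half_turn_slice a
     | Some 0 \<Rightarrow> red_flip_limit g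
     | Some (Suc n) \<Rightarrow> if even n then g else g \<circ> half_turn_red)"

lemma flip_run_simps [simp]:
  "flip_run a g None = red_flip_limit g \<circ> half_turn_slice a"
  "flip_run a g (Some 0) = red_flip_limit g"
  "flip_run a g (Some (Suc n)) = (if even n then g else g \<circ> half_turn_red)"
  by (simp_all add: flip_run_def)

lemma limit_config_flip_run:
  "limit_config omega_succ {0<..} (\<lambda>i. flip_run a g (Some i)) = red_flip_limit g"
proof
  fix c
  let ?ev = "eventually_value omega_succ {0<..} (\<lambda>i. flip_run a g (Some i)) c"
  show "limit_config omega_succ {0<..} (\<lambda>i. flip_run a g (Some i)) c = red_flip_limit g c"
  proof (cases "g (half_turn_red c) = g c")
    case True
    have "?ev v \<longleftrightarrow> v = g c" for v
    proof
      assume "?ev v"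
      then obtain i where "0 < i" "flip_run a g (Some i) c = v"
        unfolding eventually_value_def by auto
      with True show "v = g c" by (cases i) auto
    next
      assume "v = g c"
      moreover have "flip_run a g (Some k) c = g c" if "0 < k" for k
        using that True by (cases k) auto
      ultimately show "?ev v"
        unfolding eventually_value_def by (intro bexI[of _ 1]) auto
    qed
    then have "?ev = (\<lambda>v. v = g c)" by (rule ext)
    with True show ?thesis unfolding limit_config_def red_flip_limit_def by simp
  next
    case False
    have "\<not> ?ev v" for v
    proof
      assume "?ev v"
      then obtain i where "\<And>k. 0 < k \<Longrightarrow> i \<le> k \<Longrightarrow> flip_run a g (Some k) c = v"
        unfolding eventually_value_def by auto
      note eventually = this
      have "g c = v" using eventually[of "Suc (2 * i)"] by simp
      moreover have "g (half_turn_red c) = v" using eventually[of "Suc (Suc (2 * i))"] by simp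
      ultimately show False using False by simp
    qed
    then have "\<not> Ex ?ev" by blast
    then have "limit_config omega_succ {0<..} (\<lambda>i. flip_run a g (Some i)) c = NaC"
      unfolding limit_config_def by (rule if_not_P)
    with False show ?thesis by (simp add: red_flip_limit_def)
  qed
qed

lemma run_flip_seq: "run omega_succ (flip_seq a) g (flip_run a g)"
  unfolding run_iff_run_step
proof
  fix \<eta> :: "nat option"
  consider "\<eta> = None" | "\<eta> = Some 0" | "\<eta> = Some (Suc 0)" | n where "\<eta> = Some (Suc (Suc n))"
    by (metis not0_implies_Suc option.exhaust)
  then show "run_step omega_succ (flip_seq a) g (flip_run a g) \<eta>"
  proof cases
    case 1
    have "is_last omega_succ UNIV i \<longleftrightarrow> i = 0" for i by (auto simp: is_last_def)
    with 1 show ?thesis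
      by (simp add: run_step_def preds_omega_succ flip_seq_def act_half_turn
          bt_fun_half_turn_slice)
  next
    case 2
    have "\<not> is_last omega_succ {0<..} i" for i
      by (auto simp: is_last_def intro!: bexI[of _ "Suc i"])
    with 2 show ?thesis
      by (simp add: run_step_def preds_omega_succ limit_config_flip_run)
  next
    case 3
    then show ?thesis by (simp add: run_step_def preds_omega_succ is_last_def)
  next
    case (4 n)
    have "is_last omega_succ {0<..Suc n} i \<longleftrightarrow> i = Suc n" for i
      unfolding is_last_def by (auto dest: bspec[of _ _ "Suc n"])
    with 4 show ?thesis
      by (auto simp: run_step_def preds_omega_succ flip_seq_def act_half_turn
          bt_fun_half_turn_red fun_eq_iff)
  qed
qed

lemma terminal_flip_seq: "terminal omega_succ (flip_seq a) g = red_flip_limit g \<circ> half_turn_slice a"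
  using terminal_eqI[OF wf_omega_succ run_flip_seq] by simp

lemma red_flip_limit_f_solved: "red_flip_limit f_solved = f_solved"
  using f_solved_half_turn_red by (auto simp: red_flip_limit_def fun_eq_iff)

lemma not_legal_red_flip_limit_slice:
  assumes "a \<in> L"
  shows "\<not> legal L (red_flip_limit (f_solved \<circ> half_turn_slice a) \<circ> half_turn_slice a)"
proof -
  let ?c = "(PInf, Neg a, Zero)"
  have "?c \<in> cells L" using assms by (simp add: cells_def is_inf_def)
  moreover have "half_turn_slice a ?c = ?c" by (simp add: half_turn_slice_def)
  moreover have "red_flip_limit (f_solved \<circ> half_turn_slice a) ?c = NaC"
    by (simp add: red_flip_limit_def half_turn_slice_def half_turn_red_def f_solved_def)
  ultimately show ?thesis unfolding legal_def by force
qed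

theorem mainTheorem10:
  fixes L :: "'a set"
  assumes "infinite L"
  shows "\<exists>(r :: nat rel) (\<sigma> :: nat \<Rightarrow> 'a btwist).
           basic_seq L r \<sigma> \<and> convergent L r \<sigma> f_solved \<and>
           \<not> convergent L (concat_rel r r) (case_sum \<sigma> \<sigma>) f_solved"
proof -
  obtain a where a: "a \<in> L" using infinite_imp_nonempty[OF assms] by blast
  have once: "terminal omega_succ (flip_seq a) f_solved = f_solved \<circ> half_turn_slice a"
    by (simp add: terminal_flip_seq red_flip_limit_f_solved)
  have twice: "terminal (concat_rel omega_succ omega_succ) (case_sum (flip_seq a) (flip_seq a)) f_solved
      = terminal omega_succ (flip_seq a) (f_solved \<circ> half_turn_slice a)"
    unfolding once[symmetric]
    by (rule terminal_concat_rel[OF wf_omega_succ wf_omega_succ run_flip_seq run_flip_seq])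
  have "basic_seq L omega_succ (flip_seq a)"
    using a Well_order_omega_succ by (simp add: basic_seq_def is_basic_def flip_seq_def)
  moreover have "convergent L omega_succ (flip_seq a) f_solved"
    by (simp add: convergent_def once legal_f_solved_half_turn_slice)
  moreover have "\<not> convergent L (concat_rel omega_succ omega_succ) (case_sum (flip_seq a) (flip_seq a)) f_solved"
    using not_legal_red_flip_limit_slice[OF a] by (simp add: convergent_def twice terminal_flip_seq)
  ultimately show ?thesis by blast
qed

end
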